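(* Let $k\ge 2$ and let $\mathcal{C}$ be an optimum distance full flag code on $\mathbb{F}_q^{2k}$. Then $|\mathcal{C}|\le q^k+1$, with equality if and only if the $k$-projected code $\mathcal{C}_k$ is a $k$-spread of $\mathbb{F}_q^{2k}$.
   Context: $q$ is a prime power. For subspaces $\mathcal{U},\mathcal{V}$, $d_S(\mathcal{U},\mathcal{V})=\dim(\mathcal{U}+\mathcal{V})-\dim(\mathcal{U}\cap\mathcal{V})$. A full flag on $\mathbb{F}_q^{2k}$ is a tuple $(\mathcal{F}_1,\ldots,\mathcal{F}_{2k-1})$ of subspaces with $\mathcal{F}_1\subsetneq\cdots\subsetneq\mathcal{F}_{2k-1}$ and $\dim\mathcal{F}_i=i$; a full flag code is a set of at least two full flags, with distance $d_f(\mathcal{C})=\min_{\mathcal{F}\ne\mathcal{F}'}\sum_i d_S(\mathcal{F}_i,\mathcal{F}'_i)$; it is an optimum distance full flag code if $d_f(\mathcal{C})=2k^2$ (the maximum possible value). The $k$-projected code is $\mathcal{C}_k=\{\mathcal{F}_k:\mathcal{F}\in\mathcal{C}\}$. A $k$-spread of $\mathbb{F}_q^{2k}$ is a set of $k$-dimensional subspaces pairwise intersecting trivially, of cardinality $q^k+1$. *)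

theory Defs
  imports "HOL-Analysis.Analysis" "HOL-Library.FuncSet"
begin

text \<open>Ambient space: F_q^N modelled as 'a ^ 'n with 'a a finite field (q = CARD('a),
 automatically a prime power) and N = CARD('n).\<close>

definition subspace_dist :: "('a::field ^ 'n) set \<Rightarrow> ('a ^ 'n) set \<Rightarrow> nat" where
  "subspace_dist U V = vec.dim (vec.span (U \<union> V)) - vec.dim (U \<inter> V)"

definition full_flag :: "nat \<Rightarrow> (nat \<Rightarrow> ('a::field ^ 'n) set) \<Rightarrow> bool" where
  "full_flag N F \<longleftrightarrow> F \<in> extensional {1..<N}
     \<and> (\<forall>i\<in>{1..<N}. vec.subspace (F i) \<and> vec.dim (F i) = i)
     \<and> (\<forall>i\<in>{1..<N}. \<forall>j\<in>{1..<N}. i < j \<longrightarrow> F i \<subset> F j)"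

definition flag_dist :: "nat \<Rightarrow> (nat \<Rightarrow> ('a::field ^ 'n) set) \<Rightarrow> (nat \<Rightarrow> ('a ^ 'n) set) \<Rightarrow> nat" where
  "flag_dist N F G = (\<Sum>i\<in>{1..<N}. subspace_dist (F i) (G i))"

definition full_flag_code :: "nat \<Rightarrow> (nat \<Rightarrow> ('a::field ^ 'n) set) set \<Rightarrow> bool" where
  "full_flag_code N C \<longleftrightarrow> 2 \<le> card C \<and> (\<forall>F\<in>C. full_flag N F)"

definition flag_code_dist :: "nat \<Rightarrow> (nat \<Rightarrow> ('a::field ^ 'n) set) set \<Rightarrow> nat" where
  "flag_code_dist N C = Min {flag_dist N F G | F G. F \<in> C \<and> G \<in> C \<and> F \<noteq> G}"

definition optimum_distance_full_flag_code :: "nat \<Rightarrow> (nat \<Rightarrow> ('a::field ^ 'n) set) set \<Rightarrow> bool" where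
  "optimum_distance_full_flag_code k C \<longleftrightarrow>
     full_flag_code (2*k) C \<and> flag_code_dist (2*k) C = 2 * k^2"

definition projected_code :: "nat \<Rightarrow> (nat \<Rightarrow> ('a::field ^ 'n) set) set \<Rightarrow> ('a ^ 'n) set set" where
  "projected_code i C = (\<lambda>F. F i) ` C"

definition is_spread :: "nat \<Rightarrow> ('a::{field,finite} ^ 'n) set set \<Rightarrow> bool" where
  "is_spread k S \<longleftrightarrow> (\<forall>U\<in>S. vec.subspace U \<and> vec.dim U = k)
     \<and> (\<forall>U\<in>S. \<forall>V\<in>S. U \<noteq> V \<longrightarrow> U \<inter> V = {0})
     \<and> card S = CARD('a)^k + 1"

end

theory Submission
  imports Defs
begin

text \<open>Every term of the flag distance is bounded by the distance of two subspaces of the same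
  dimension i in F_q^2k, namely 2 min(i, 2k - i), and these bounds add up to exactly 2k^2.
  So in an optimum distance code every term attains its bound; for i = k this says that the
  k-dimensional subspaces of distinct flags intersect trivially. The k-projected code is then
  a partial spread of the same cardinality as the code, and counting nonzero vectors bounds
  a partial spread by q^k + 1, with equality precisely for spreads.\<close>

definition partial_spread :: "nat \<Rightarrow> ('a::field ^ 'n) set set \<Rightarrow> bool" where
  "partial_spread k S \<longleftrightarrow> (\<forall>U\<in>S. vec.subspace U \<and> vec.dim U = k)
     \<and> (\<forall>U\<in>S. \<forall>V\<in>S. U \<noteq> V \<longrightarrow> U \<inter> V = {0})"

lemma is_spread_iff_partial_spread:
  fixes S :: "('a::{field,finite} ^ 'n) set set"
  shows "is_spread k S \<longleftrightarrow> partial_spread k S \<and> card S = CARD('a)^k + 1"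
  unfolding is_spread_def partial_spread_def by (simp only: conj_assoc)

lemma dim_span_Un_add_dim_Int:
  fixes U V :: "('a::field ^ 'n) set"
  assumes "vec.subspace U" "vec.subspace V"
  shows "vec.dim (vec.span (U \<union> V)) + vec.dim (U \<inter> V) = vec.dim U + vec.dim V"
proof -
  have "vec.span U = U" "vec.span V = V"
    using assms by simp_all
  then have "vec.span (U \<union> V) = {x + y |x y. x \<in> U \<and> y \<in> V}"
    using vec.span_Un[of U V] by (simp only:)
  then show ?thesis
    using vec.dim_sums_Int[OF assms] by simp
qed

lemma subspace_dist_same_dim:
  fixes U V :: "('a::field ^ 'n) set"
  assumes "vec.subspace U" "vec.subspace V" "vec.dim U = i" "vec.dim V = i"
  shows "subspace_dist U V = 2 * (i - vec.dim (U \<inter> V))"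
  using dim_span_Un_add_dim_Int[OF assms(1,2)] assms(3,4) unfolding subspace_dist_def by linarith

lemma subspace_dist_le:
  fixes U V :: "('a::field ^ 'n) set"
  assumes "vec.subspace U" "vec.subspace V" "vec.dim U = i" "vec.dim V = i"
  shows "subspace_dist U V \<le> 2 * min i (CARD('n) - i)"
  using dim_span_Un_add_dim_Int[OF assms(1,2)] dim_subset_UNIV_cart_gen[of "vec.span (U \<union> V)"]
    subspace_dist_same_dim[OF assms] assms(3,4)
  by linarith

lemma subspace_dist_eq_imp_Int_zero:
  fixes U V :: "('a::field ^ 'n) set"
  assumes "vec.subspace U" "vec.subspace V" "vec.dim U = i" "vec.dim V = i"
    and "subspace_dist U V = 2 * i"
  shows "U \<inter> V = {0}"
proof -
  have "vec.dim (U \<inter> V) = 0"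
    using subspace_dist_same_dim[OF assms(1-4)] assms(3,5) vec.dim_subset[OF Int_lower1, of U V]
    by linarith
  then have "U \<inter> V \<subseteq> {0}"
    by simp
  moreover have "0 \<in> U \<inter> V"
    using assms(1,2) vec.subspace_0 by blast
  ultimately show ?thesis
    by blast
qed

lemma sum_min_complement: "(\<Sum>i\<in>{1..<2*k}. min i (2*k - i)) = (k::nat)^2"
proof (induction k)
  case 0
  then show ?case by simp
next
  case (Suc k)
  have "(\<Sum>i\<in>{1..<2*k}. min i (2*Suc k - i))
      = (\<Sum>i\<in>{1..<2*k}. min i (2*k - i) + (if k < i then 2 else 0))"
    by (rule sum.cong) (auto simp: min_def)
  also have "\<dots> = k^2 + (\<Sum>i\<in>{1..<2*k}. if k < i then 2 else 0)"
    using Suc.IH by (simp add: sum.distrib)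
  also have "(\<Sum>i\<in>{1..<2*k}. if k < i then 2 else 0) = (\<Sum>i\<in>{k<..<2*k}. 2)"
    by (rule sum.mono_neutral_cong_right) auto
  finally have "(\<Sum>i\<in>{1..<2*k}. min i (2*Suc k - i)) = k^2 + 2 * (k - 1)"
    by simp
  moreover have "{1..<2*Suc k} = insert (2*k+1) (insert (2*k) {1..<2*k})" if "k > 0"
    using that by auto
  ultimately show ?case
    by (cases "k = 0") (simp_all add: power2_eq_square algebra_simps)
qed

lemma flag_code_dist_le:
  assumes "finite C" "F \<in> C" "G \<in> C" "F \<noteq> G"
  shows "flag_code_dist N C \<le> flag_dist N F G"
proof -
  let ?D = "{flag_dist N F G | F G. F \<in> C \<and> G \<in> C \<and> F \<noteq> G}"
  have "?D \<subseteq> (\<lambda>(F, G). flag_dist N F G) ` (C \<times> C)"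
    by auto
  then have "finite ?D"
    by (rule finite_subset) (simp add: assms(1))
  moreover have "flag_dist N F G \<in> ?D"
    using assms(2-4) by blast
  ultimately show ?thesis
    unfolding flag_code_dist_def by simp
qed

lemma optimum_distance_middle_subspace:
  assumes "k \<ge> 1" "optimum_distance_full_flag_code k C" "F \<in> C"
  shows "vec.subspace (F k) \<and> vec.dim (F k) = k"
  using assms
  unfolding optimum_distance_full_flag_code_def full_flag_code_def full_flag_def by auto

text \<open>All terms of the flag distance attain their upper bound, in particular the middle one.\<close>

lemma optimum_distance_middle_Int_zero:
  fixes C :: "(nat \<Rightarrow> ('a::field ^ 'n) set) set"
  assumes "CARD('n) = 2 * k" "k \<ge> 1" "optimum_distance_full_flag_code k C"
    and "F \<in> C" "G \<in> C" "F \<noteq> G"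
  shows "F k \<inter> G k = {0}"
proof -
  let ?I = "{1..<2*k}"
  let ?d = "\<lambda>i. subspace_dist (F i) (G i)" and ?b = "\<lambda>i. 2 * min i (2*k - i)"
  have flags: "full_flag (2*k) F" "full_flag (2*k) G" and "2 \<le> card C"
    and dist: "flag_code_dist (2*k) C = 2 * k^2"
    using assms(3-5) unfolding optimum_distance_full_flag_code_def full_flag_code_def by auto
  then have "finite C"
    using card.infinite by fastforce
  have sub: "vec.subspace (F i) \<and> vec.dim (F i) = i \<and> vec.subspace (G i) \<and> vec.dim (G i) = i"
    if "i \<in> ?I" for i
    using flags that unfolding full_flag_def by blast
  have le: "?d i \<le> ?b i" if "i \<in> ?I" for i
    using subspace_dist_le[of "F i" "G i" i] sub[OF that] assms(1) by simp
  have "sum ?b ?I = 2 * k^2"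
    using sum_min_complement[of k] by (simp add: sum_distrib_left[symmetric])
  also have "\<dots> \<le> sum ?d ?I"
    using flag_code_dist_le[OF \<open>finite C\<close> assms(4-6), of "2*k"] dist
    unfolding flag_dist_def by simp
  moreover have "sum ?d ?I \<le> sum ?b ?I"
    using le by (rule sum_mono)
  ultimately have "sum ?d ?I = sum ?b ?I"
    by linarith
  then have "?d k = ?b k"
    using sum_mono_inv[of ?d ?I ?b k] le assms(2) by auto
  then show ?thesis
    using subspace_dist_eq_imp_Int_zero[of "F k" "G k" k] sub[of k] assms(2) by auto
qed

lemma optimum_distance_projected_partial_spread:
  fixes C :: "(nat \<Rightarrow> ('a::field ^ 'n) set) set"
  assumes "CARD('n) = 2 * k" "k \<ge> 1" "optimum_distance_full_flag_code k C"
  shows "partial_spread k (projected_code k C)"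
  using optimum_distance_middle_subspace[OF assms(2,3)] optimum_distance_middle_Int_zero[OF assms]
  unfolding partial_spread_def projected_code_def by blast

lemma card_projected_code_optimum_distance:
  fixes C :: "(nat \<Rightarrow> ('a::field ^ 'n) set) set"
  assumes "CARD('n) = 2 * k" "k \<ge> 1" "optimum_distance_full_flag_code k C"
  shows "card (projected_code k C) = card C"
proof -
  have "inj_on (\<lambda>F. F k) C"
  proof (rule inj_onI, rule ccontr)
    fix F G assume "F \<in> C" "G \<in> C" "F k = G k" "F \<noteq> G"
    then have "F k = {0}"
      using optimum_distance_middle_Int_zero[OF assms] by auto
    then show False
      using optimum_distance_middle_subspace[OF assms(2,3) \<open>F \<in> C\<close>] assms(2) by simp
  qed
  then show ?thesis
    unfolding projected_code_def by (rule card_image)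
qed

lemma card_subspace:
  fixes U :: "('a::{field,finite} ^ 'n) set"
  assumes "vec.subspace U"
  shows "card U = CARD('a) ^ vec.dim U"
proof -
  obtain B where B: "B \<subseteq> U" "vec.independent B" "U \<subseteq> vec.span B" "card B = vec.dim U"
    using vec.basis_exists by blast
  have "finite B"
    using B(2) vec.finiteI_independent by blast
  have span_B: "vec.span B = U"
    using B(1,3) assms vec.span_minimal by blast
  define comb where "comb u = (\<Sum>v\<in>B. u v *s v)" for u :: "'a ^ 'n \<Rightarrow> 'a"
  have "comb ` (B \<rightarrow>\<^sub>E UNIV) = U"
  proof
    show "comb ` (B \<rightarrow>\<^sub>E UNIV) \<subseteq> U"
      using span_B vec.span_finite[OF \<open>finite B\<close>] unfolding comb_def by auto
  next
    show "U \<subseteq> comb ` (B \<rightarrow>\<^sub>E UNIV)"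
    proof
      fix x assume "x \<in> U"
      then obtain u where "x = comb u"
        using span_B vec.span_finite[OF \<open>finite B\<close>] unfolding comb_def by auto
      also have "\<dots> = comb (restrict u B)"
        unfolding comb_def by (rule sum.cong) auto
      finally show "x \<in> comb ` (B \<rightarrow>\<^sub>E UNIV)"
        by auto
    qed
  qed
  moreover have "inj_on comb (B \<rightarrow>\<^sub>E UNIV)"
  proof
    fix u w assume u: "u \<in> B \<rightarrow>\<^sub>E UNIV" and w: "w \<in> B \<rightarrow>\<^sub>E UNIV" and "comb u = comb w"
    have indep: "\<forall>v\<in>B. c v = 0" if "(\<Sum>v\<in>B. c v *s v) = 0" for c
      using B(2) that unfolding vec.independent_explicit by blast
    have "(\<Sum>v\<in>B. (u v - w v) *s v) = 0"
      using \<open>comb u = comb w\<close> unfolding comb_def by (simp add: vector_sub_rdistrib sum_subtractf)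
    then have "\<forall>v\<in>B. u v - w v = 0"
      by (rule indep)
    then show "u = w"
      using u w by (auto simp: PiE_def extensional_def fun_eq_iff)
  qed
  ultimately have "card U = card (B \<rightarrow>\<^sub>E (UNIV :: 'a set))"
    using card_image by fastforce
  also have "\<dots> = CARD('a) ^ vec.dim U"
    using \<open>finite B\<close> B(4) by (simp add: card_PiE)
  finally show ?thesis .
qed

text \<open>The nonzero vectors of the members of a partial spread are pairwise disjoint.\<close>

lemma partial_spread_card_mult_le:
  fixes S :: "('a::{field,finite} ^ 'n) set set"
  assumes "partial_spread k S"
  shows "card S * (CARD('a)^k - 1) \<le> CARD('a)^CARD('n) - 1"
proof -
  have sub: "vec.subspace U" "vec.dim U = k" if "U \<in> S" for U
    using assms that unfolding partial_spread_def by auto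
  have disj: "U \<inter> V = {0}" if "U \<in> S" "V \<in> S" "U \<noteq> V" for U V
    using assms that unfolding partial_spread_def by auto
  have "finite S"
    by (rule finite_subset[of _ UNIV]) simp_all
  have "card S * (CARD('a)^k - 1) = (\<Sum>U\<in>S. CARD('a)^k - 1)"
    by simp
  also have "\<dots> = (\<Sum>U\<in>S. card (U - {0}))"
    by (rule sum.cong) (simp_all add: card_Diff_singleton sub card_subspace vec.subspace_0)
  also have "\<dots> = card (\<Union>U\<in>S. U - {0})"
    by (rule card_UN_disjoint[symmetric]) (use \<open>finite S\<close> disj in auto)
  also have "\<dots> \<le> card (UNIV - {0 :: 'a ^ 'n})"
    by (rule card_mono) auto
  also have "\<dots> = CARD('a)^CARD('n) - 1"
    by (simp add: card_Diff_singleton)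
  finally show ?thesis .
qed

lemma partial_spread_card_le:
  fixes S :: "('a::{field,finite} ^ 'n) set set"
  assumes "CARD('n) = 2 * k" "k \<ge> 1" "partial_spread k S"
  shows "card S \<le> CARD('a)^k + 1"
proof -
  define m where "m = CARD('a)^k"
  have "2 \<le> CARD('a)"
    using card_mono[of UNIV "{0::'a, 1}"] by simp
  then have "2 \<le> m"
    unfolding m_def using assms(2) self_le_power[of "CARD('a)" k] by linarith
  have "card S * (m - 1) \<le> m * m - 1"
    using partial_spread_card_mult_le[OF assms(3)] assms(1)
    unfolding m_def by (simp add: power_mult power2_eq_square mult.commute)
  also have "\<dots> = (m + 1) * (m - 1)"
    using \<open>2 \<le> m\<close> by (cases m) simp_all
  finally have "card S * (m - 1) \<le> (m + 1) * (m - 1)" .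
  then have "card S \<le> m + 1"
    by (rule mult_right_le_imp_le) (use \<open>2 \<le> m\<close> in simp)
  then show ?thesis
    unfolding m_def .
qed

theorem theorem4p5:
  fixes C :: "(nat \<Rightarrow> ('a::{field,finite} ^ 'n) set) set" and k :: nat
  assumes "CARD('n) = 2 * k" and "k \<ge> 2"
    and "optimum_distance_full_flag_code k C"
  shows "card C \<le> CARD('a)^k + 1
    \<and> (card C = CARD('a)^k + 1 \<longleftrightarrow> is_spread k (projected_code k C))"
proof -
  have "k \<ge> 1"
    using assms(2) by simp
  have spread: "partial_spread k (projected_code k C)"
    using optimum_distance_projected_partial_spread[OF assms(1) \<open>k \<ge> 1\<close> assms(3)] .
  have card_eq: "card (projected_code k C) = card C"
    using card_projected_code_optimum_distance[OF assms(1) \<open>k \<ge> 1\<close> assms(3)] .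
  have "card C \<le> CARD('a)^k + 1"
    using partial_spread_card_le[OF assms(1) \<open>k \<ge> 1\<close> spread] card_eq by simp
  then show ?thesis
    using spread card_eq by (simp add: is_spread_iff_partial_spread)
qed

end
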